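(* Let $n$ be a positive integer with $n \equiv 1 \pmod{3}$, let $a = (n(n+1)-2)/3$, and let $\sigma$ be a permutation of $\mathbb{Z}_n = \{0,\dots,n-1\}$ such that $f_\sigma(\delta) \in \{a, a+2\}$ for every $\delta \in \{1,\dots,n-1\}$ (a near-perfect permutation). Then the Latin square $L$ defined by $L[i][j] = (i + \sigma^{-1}(j)) \bmod n$ for $i,j \in \{0,\dots,n-1\}$ satisfies $$I(L) = \frac{4n(n-1)}{9}.$$
   Context: For a permutation $\sigma$ of $\mathbb{Z}_n$, the shift correlation at shift $\delta$ is $f_\sigma(\delta) = \sum_{j=0}^{n-1} \lvert \sigma((j+\delta) \bmod n) - \sigma(j) \rvert$, where $\sigma$ takes values in $\{0,\dots,n-1\}$ and the absolute value is of ordinary integers. For an $n\times n$ Latin square $L$ (each symbol of $\{0,\dots,n-1\}$ occurring exactly once in each row and column; rows and columns indexed by $\{0,\dots,n-1\}$), $\mathrm{pos}(r,s)$ is the column containing symbol $s$ in row $r$, $d(r_1,r_2) = \sum_{s=0}^{n-1} \lvert \mathrm{pos}(r_1,s) - \mathrm{pos}(r_2,s)\rvert$, and the imbalance is $I(L) = \frac{1}{3} \sum_{0 \le r_1 < r_2 \le n-1} \lvert 3\, d(r_1,r_2) - n(n+1) \rvert$. *)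

theory Defs
  imports Complex_Main
begin

definition shift_corr :: "nat \<Rightarrow> (nat \<Rightarrow> nat) \<Rightarrow> nat \<Rightarrow> int" where
  "shift_corr n \<sigma> \<delta> = (\<Sum>j<n. \<bar>int (\<sigma> ((j + \<delta>) mod n)) - int (\<sigma> j)\<bar>)"

definition latin_square :: "nat \<Rightarrow> (nat \<Rightarrow> nat \<Rightarrow> nat) \<Rightarrow> bool" where
  "latin_square n L \<longleftrightarrow>
     (\<forall>r<n. bij_betw (\<lambda>c. L r c) {..<n} {..<n}) \<and>
     (\<forall>c<n. bij_betw (\<lambda>r. L r c) {..<n} {..<n})"

definition pos :: "nat \<Rightarrow> (nat \<Rightarrow> nat \<Rightarrow> nat) \<Rightarrow> nat \<Rightarrow> nat \<Rightarrow> nat" where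
  "pos n L r s = (THE c. c < n \<and> L r c = s)"

definition row_dist :: "nat \<Rightarrow> (nat \<Rightarrow> nat \<Rightarrow> nat) \<Rightarrow> nat \<Rightarrow> nat \<Rightarrow> int" where
  "row_dist n L r1 r2 = (\<Sum>s<n. \<bar>int (pos n L r1 s) - int (pos n L r2 s)\<bar>)"

definition imbalance :: "nat \<Rightarrow> (nat \<Rightarrow> nat \<Rightarrow> nat) \<Rightarrow> real" where
  "imbalance n L = (1/3) * (\<Sum>(r1, r2) \<in> {(r1, r2). r1 < r2 \<and> r2 < n}.
      real_of_int \<bar>3 * row_dist n L r1 r2 - int (n * (n + 1))\<bar>)"

end

theory Submission
  imports Defs "HOL-Number_Theory.Cong"
begin

text \<open>Row \<open>r\<close> of the square is row \<open>0\<close> cyclically shifted by \<open>r\<close>, so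
  \<open>pos(r, s) = \<sigma>(s - r)\<close> and \<open>d(r\<^sub>1, r\<^sub>2) = f\<^sub>\<sigma>(r\<^sub>2 - r\<^sub>1)\<close> (indices mod \<open>n\<close>).
  Every nonzero shift arises from exactly \<open>n\<close> ordered pairs of rows, hence
  \<open>6 I(L) = n \<Sum>\<^bsub>\<delta>\<noteq>0\<^esub> |3 f\<^sub>\<sigma>(\<delta>) - n(n+1)|\<close>. Summing \<open>f\<^sub>\<sigma>\<close> over all shifts sums
  \<open>|\<sigma>(k) - \<sigma>(j)|\<close> over all pairs, which gives \<open>(n\<^sup>3 - n)/3\<close> whatever \<open>\<sigma>\<close> is. For a
  near-perfect \<open>\<sigma>\<close> each deviation \<open>|3 f\<^sub>\<sigma>(\<delta>) - n(n+1)|\<close> is \<open>2\<close> or \<open>4\<close>, i.e. equals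
  \<open>2 + f\<^sub>\<sigma>(\<delta>) - a\<close>; so the deviation sum is linear in \<open>\<Sum> f\<^sub>\<sigma>\<close> and equals \<open>8(n - 1)/3\<close>.\<close>

lemma bij_betw_add_mod: "bij_betw (\<lambda>s. (s + c) mod n) {..<n} {..<(n::nat)}"
proof -
  have "inj_on (\<lambda>s. (s + c) mod n) {..<n}"
    by (rule inj_onI) (metis cong_def cong_add_rcancel_nat lessThan_iff mod_less)
  moreover have "(\<lambda>s. (s + c) mod n) ` {..<n} \<subseteq> {..<n}" by auto
  ultimately show ?thesis
    by (simp add: bij_betw_def endo_inj_surj)
qed

lemma sum_lessThan_rotate:
  fixes h :: "nat \<Rightarrow> 'a::comm_monoid_add"
  shows "(\<Sum>s<n. h ((s + c) mod n)) = (\<Sum>s<n. h s)"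
  by (rule sum.reindex_bij_betw[OF bij_betw_add_mod])

lemma sum_sum_abs_diff_lessThan:
  "3 * (\<Sum>x<n. \<Sum>y<n. \<bar>int y - int x\<bar>) = int n ^ 3 - int n"
proof (induction n)
  case 0
  then show ?case by simp
next
  case (Suc n)
  have gauss: "2 * (\<Sum>x<m. \<bar>int n - int x\<bar>) = int m * (2 * int n - int m + 1)" if "m \<le> n" for m
    using that by (induction m) (auto simp: algebra_simps)
  have "(\<Sum>x<Suc n. \<Sum>y<Suc n. \<bar>int y - int x\<bar>)
      = (\<Sum>x<n. \<Sum>y<n. \<bar>int y - int x\<bar>) + (\<Sum>x<n. \<bar>int n - int x\<bar>) + (\<Sum>y<n. \<bar>int y - int n\<bar>)"
    by (simp add: sum.distrib)
  also have "(\<Sum>y<n. \<bar>int y - int n\<bar>) = (\<Sum>x<n. \<bar>int n - int x\<bar>)"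
    by (simp add: abs_minus_commute)
  finally show ?case
    using Suc.IH gauss[of n] by (simp add: algebra_simps power3_eq_cube)
qed

lemma sum_sum_symmetric_lessThan:
  fixes G :: "nat \<Rightarrow> nat \<Rightarrow> 'a::comm_semiring_1"
  assumes sym: "\<And>x y. G x y = G y x"
  shows "(\<Sum>x<n. \<Sum>y<n. G x y)
    = 2 * (\<Sum>(x, y) \<in> {(x, y). x < y \<and> y < n}. G x y) + (\<Sum>x<n. G x x)"
proof -
  define U where "U = {(x, y). x < y \<and> y < (n::nat)}"
  have pairs: "{..<n} \<times> {..<n} = U \<union> (prod.swap ` U \<union> (\<lambda>x. (x, x)) ` {..<n})"
    unfolding U_def by auto
  have fin: "finite U" unfolding U_def
    by (rule finite_subset[of _ "{..<n} \<times> {..<n}"]) auto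
  have swap: "(\<Sum>p \<in> prod.swap ` U. case_prod G p) = (\<Sum>p \<in> U. case_prod G p)"
    by (subst sum.reindex) (auto simp: sym)
  have "(\<Sum>x<n. \<Sum>y<n. G x y) = (\<Sum>p \<in> {..<n} \<times> {..<n}. case_prod G p)"
    by (simp add: sum.cartesian_product)
  also have "\<dots> = (\<Sum>p \<in> U. case_prod G p) + ((\<Sum>p \<in> prod.swap ` U. case_prod G p)
      + (\<Sum>p \<in> (\<lambda>x. (x, x)) ` {..<n}. case_prod G p))"
    unfolding pairs
    by (intro trans[OF sum.union_disjoint] arg_cong2[where f = "(+)"] refl sum.union_disjoint)
      (use fin in \<open>auto simp: U_def\<close>)
  also have "\<dots> = 2 * (\<Sum>p \<in> U. case_prod G p) + (\<Sum>x<n. G x x)"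
    by (simp add: swap sum.reindex inj_on_def mult_2 add.assoc)
  finally show ?thesis unfolding U_def .
qed

lemma three_dvd_pronic_minus_two:
  assumes "n mod 3 = 1"
  shows "3 dvd int (n * (n + 1)) - 2"
proof -
  obtain k where "n = 3 * k + 1"
    using mult_div_mod_eq[of 3 n] assms by metis
  then have "int (n * (n + 1)) - 2 = 3 * int (3 * k * k + 3 * k)"
    by (simp add: algebra_simps)
  then show ?thesis by simp
qed

definition cyclic_latin_square :: "nat \<Rightarrow> (nat \<Rightarrow> nat) \<Rightarrow> nat \<Rightarrow> nat \<Rightarrow> nat" where
  "cyclic_latin_square n \<sigma> = (\<lambda>i j. (i + inv_into {..<n} \<sigma> j) mod n)"

lemma pos_cyclic_latin_square:
  assumes \<sigma>: "bij_betw \<sigma> {..<n} {..<n}" and r: "r < n" and s: "s < n"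
  shows "pos n (cyclic_latin_square n \<sigma>) r s = \<sigma> ((s + n - r) mod n)"
  unfolding pos_def
proof (rule the_equality)
  define t where "t = (s + n - r) mod n"
  have "t < n" using s by (simp add: t_def)
  have "(r + t) mod n = s"
    using r s by (simp add: t_def mod_add_right_eq)
  moreover have "\<sigma> t < n"
    using bij_betw_apply[OF \<sigma>] \<open>t < n\<close> by simp
  moreover have "inv_into {..<n} \<sigma> (\<sigma> t) = t"
    using bij_betw_inv_into_left[OF \<sigma>] \<open>t < n\<close> by simp
  ultimately show "\<sigma> t < n \<and> cyclic_latin_square n \<sigma> r (\<sigma> t) = s"
    by (simp add: cyclic_latin_square_def)
next
  fix c assume c: "c < n \<and> cyclic_latin_square n \<sigma> r c = s"
  define t where "t = inv_into {..<n} \<sigma> c"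
  have t: "t < n"
    using bij_betw_apply[OF bij_betw_inv_into[OF \<sigma>]] c by (simp add: t_def)
  have "(r + t) mod n = s"
    using c by (simp add: cyclic_latin_square_def t_def)
  then have "t = (s + n - r) mod n"
    using t r by (cases "r + t < n") (auto simp: le_mod_geq)
  moreover have "\<sigma> t = c"
    using bij_betw_inv_into_right[OF \<sigma>] c by (simp add: t_def)
  ultimately show "c = \<sigma> ((s + n - r) mod n)" by simp
qed

lemma row_dist_cyclic_latin_square:
  assumes \<sigma>: "bij_betw \<sigma> {..<n} {..<n}" and r1: "r1 < n" and r2: "r2 < n"
  shows "row_dist n (cyclic_latin_square n \<sigma>) r1 r2 = shift_corr n \<sigma> ((r2 + n - r1) mod n)"
proof -
  define \<delta> where "\<delta> = (r2 + n - r1) mod n"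
  define h where "h = (\<lambda>j. \<bar>int (\<sigma> ((j + \<delta>) mod n)) - int (\<sigma> j)\<bar>)"
  have "row_dist n (cyclic_latin_square n \<sigma>) r1 r2 = (\<Sum>s<n. h ((s + (n - r2)) mod n))"
    unfolding row_dist_def
  proof (rule sum.cong)
    fix s assume "s \<in> {..<n}"
    then have s: "s < n" by simp
    have "(s + (n - r2)) + (r2 + n - r1) = (s + n - r1) + n"
      using r1 r2 by simp
    then have "((s + (n - r2)) mod n + \<delta>) mod n = (s + n - r1) mod n"
      by (metis \<delta>_def mod_add_eq mod_add_self2)
    moreover have "s + (n - r2) = s + n - r2"
      using r2 by simp
    ultimately show "\<bar>int (pos n (cyclic_latin_square n \<sigma>) r1 s) - int (pos n (cyclic_latin_square n \<sigma>) r2 s)\<bar>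
        = h ((s + (n - r2)) mod n)"
      by (simp add: h_def pos_cyclic_latin_square[OF \<sigma>] r1 r2 s abs_minus_commute)
  qed simp
  also have "\<dots> = (\<Sum>s<n. h s)" by (rule sum_lessThan_rotate)
  finally show ?thesis unfolding h_def shift_corr_def \<delta>_def .
qed

lemma shift_corr_0: "shift_corr n \<sigma> 0 = 0"
  by (simp add: shift_corr_def)

lemma sum_shift_corr:
  assumes \<sigma>: "bij_betw \<sigma> {..<n} {..<n}"
  shows "3 * (\<Sum>\<delta><n. shift_corr n \<sigma> \<delta>) = int n ^ 3 - int n"
proof -
  have "(\<Sum>\<delta><n. shift_corr n \<sigma> \<delta>) = (\<Sum>j<n. \<Sum>\<delta><n. \<bar>int (\<sigma> ((\<delta> + j) mod n)) - int (\<sigma> j)\<bar>)"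
    unfolding shift_corr_def by (subst sum.swap) (simp add: add.commute)
  also have "\<dots> = (\<Sum>j<n. \<Sum>k<n. \<bar>int (\<sigma> k) - int (\<sigma> j)\<bar>)"
    by (intro sum.cong refl sum_lessThan_rotate)
  also have "\<dots> = (\<Sum>j<n. \<Sum>y<n. \<bar>int y - int (\<sigma> j)\<bar>)"
    by (intro sum.cong refl sum.reindex_bij_betw[OF \<sigma>])
  also have "\<dots> = (\<Sum>x<n. \<Sum>y<n. \<bar>int y - int x\<bar>)"
    by (rule sum.reindex_bij_betw[OF \<sigma>])
  finally show ?thesis using sum_sum_abs_diff_lessThan by simp
qed

lemma imbalance_cyclic_latin_square:
  assumes \<sigma>: "bij_betw \<sigma> {..<n} {..<n}" and "n > 0"
  shows "6 * imbalance n (cyclic_latin_square n \<sigma>)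
    = real n * (\<Sum>\<delta>\<in>{1..<n}. \<bar>3 * shift_corr n \<sigma> \<delta> - int (n * (n + 1))\<bar>)"
proof -
  define L where "L = cyclic_latin_square n \<sigma>"
  define G where "G = (\<lambda>r1 r2. \<bar>3 * row_dist n L r1 r2 - int (n * (n + 1))\<bar>)"
  define h where "h = (\<lambda>\<delta>. \<bar>3 * shift_corr n \<sigma> \<delta> - int (n * (n + 1))\<bar>)"
  define S where "S = (\<Sum>(r1, r2) \<in> {(r1, r2). r1 < r2 \<and> r2 < n}. G r1 r2)"
  have "(\<Sum>x<n. \<Sum>y<n. G x y) = (\<Sum>x<n. \<Sum>y<n. h ((y + (n - x)) mod n))"
    by (intro sum.cong refl) (simp add: G_def h_def L_def row_dist_cyclic_latin_square[OF \<sigma>])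
  also have "\<dots> = (\<Sum>x<n. \<Sum>y<n. h y)"
    by (intro sum.cong refl sum_lessThan_rotate)
  also have "\<dots> = int n * (h 0 + (\<Sum>\<delta>\<in>{1..<n}. h \<delta>))"
    using sum.atLeast_Suc_lessThan[of 0 n h] \<open>n > 0\<close> by (simp add: atLeast0LessThan)
  also have "h 0 = int (n * (n + 1))"
    by (simp only: h_def shift_corr_0 mult_zero_right diff_0 abs_minus_cancel abs_of_nat)
  finally have "(\<Sum>x<n. \<Sum>y<n. G x y) = int n * int (n * (n + 1)) + int n * (\<Sum>\<delta>\<in>{1..<n}. h \<delta>)"
    by (simp only: distrib_left)
  moreover have "(\<Sum>x<n. \<Sum>y<n. G x y) = 2 * S + int n * int (n * (n + 1))"
  proof -
    have "G x y = G y x" for x y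
      unfolding G_def row_dist_def by (simp add: abs_minus_commute)
    moreover have "G x x = int (n * (n + 1))" for x
      by (simp only: G_def row_dist_def diff_self abs_zero sum.neutral_const mult_zero_right
          diff_0 abs_minus_cancel abs_of_nat)
    ultimately show ?thesis
      using sum_sum_symmetric_lessThan[of G n] by (simp add: S_def)
  qed
  ultimately have "2 * S = int n * (\<Sum>\<delta>\<in>{1..<n}. h \<delta>)" by simp
  then have "2 * real_of_int S = real n * real_of_int (\<Sum>\<delta>\<in>{1..<n}. h \<delta>)"
    by (metis of_int_mult of_int_numeral of_int_of_nat_eq)
  moreover have "imbalance n L = real_of_int S / 3"
    by (simp add: imbalance_def S_def G_def of_int_sum case_prod_unfold)
  ultimately show ?thesis by (simp add: L_def h_def)
qed

lemma near_perfect_deviation_sum: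
  fixes f :: "nat \<Rightarrow> int"
  assumes a: "3 * a = int (n * (n + 1)) - 2"
    and near: "\<forall>\<delta>\<in>{1..<n}. f \<delta> \<in> {a, a + 2}"
    and sum: "3 * (\<Sum>\<delta>\<in>{1..<n}. f \<delta>) = int n ^ 3 - int n"
    and "n > 0"
  shows "3 * (\<Sum>\<delta>\<in>{1..<n}. \<bar>3 * f \<delta> - int (n * (n + 1))\<bar>) = 8 * (int n - 1)"
proof -
  have "(\<Sum>\<delta>\<in>{1..<n}. \<bar>3 * f \<delta> - int (n * (n + 1))\<bar>) = (\<Sum>\<delta>\<in>{1..<n}. 2 - a + f \<delta>)"
  proof (rule sum.cong)
    fix \<delta> assume "\<delta> \<in> {1..<n}"
    then have "f \<delta> = a \<or> f \<delta> = a + 2" using near by auto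
    then show "\<bar>3 * f \<delta> - int (n * (n + 1))\<bar> = 2 - a + f \<delta>" using a by auto
  qed simp
  also have "\<dots> = (int n - 1) * (2 - a) + (\<Sum>\<delta>\<in>{1..<n}. f \<delta>)"
    using \<open>n > 0\<close> by (simp add: sum.distrib of_nat_diff)
  finally have "3 * (\<Sum>\<delta>\<in>{1..<n}. \<bar>3 * f \<delta> - int (n * (n + 1))\<bar>)
      = (int n - 1) * (6 - 3 * a) + 3 * (\<Sum>\<delta>\<in>{1..<n}. f \<delta>)"
    by (simp add: algebra_simps)
  also have "\<dots> = (int n - 1) * (8 - int n * (int n + 1)) + (int n ^ 3 - int n)"
  proof -
    have "6 - 3 * a = 8 - int n * (int n + 1)"
      using a by (simp add: algebra_simps)
    then show ?thesis using sum by simp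
  qed
  also have "\<dots> = 8 * (int n - 1)"
    by (simp add: algebra_simps power3_eq_cube)
  finally show ?thesis .
qed

theorem proposition5:
  fixes n :: nat and \<sigma> :: "nat \<Rightarrow> nat" and a :: int
  assumes "n > 0"
    and "n mod 3 = 1"
    and "a = (int (n * (n + 1)) - 2) div 3"
    and "bij_betw \<sigma> {..<n} {..<n}"
    and "\<forall>\<delta>\<in>{1..n-1}. shift_corr n \<sigma> \<delta> \<in> {a, a + 2}"
  shows "imbalance n (\<lambda>i j. (i + inv_into {..<n} \<sigma> j) mod n)
           = 4 * real n * (real n - 1) / 9"
proof -
  have a: "3 * a = int (n * (n + 1)) - 2"
    using three_dvd_pronic_minus_two[OF assms(2)] assms(3) by simp
  have near: "\<forall>\<delta>\<in>{1..<n}. shift_corr n \<sigma> \<delta> \<in> {a, a + 2}"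
    using assms(5) by auto
  have "(\<Sum>\<delta>\<in>{1..<n}. shift_corr n \<sigma> \<delta>) = (\<Sum>\<delta><n. shift_corr n \<sigma> \<delta>)"
    using sum_shift_lb_Suc0_0_upt[of "shift_corr n \<sigma>" n, OF shift_corr_0]
    by (simp only: One_nat_def atLeast0LessThan)
  then have sum: "3 * (\<Sum>\<delta>\<in>{1..<n}. shift_corr n \<sigma> \<delta>) = int n ^ 3 - int n"
    using sum_shift_corr[OF assms(4)] by simp
  define D where "D = (\<Sum>\<delta>\<in>{1..<n}. \<bar>3 * shift_corr n \<sigma> \<delta> - int (n * (n + 1))\<bar>)"
  have "6 * imbalance n (cyclic_latin_square n \<sigma>) = real n * real_of_int D"
    unfolding D_def by (rule imbalance_cyclic_latin_square[OF assms(4) \<open>n > 0\<close>])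
  also have "real_of_int D = 8 * (real n - 1) / 3"
    using arg_cong[where f = real_of_int, OF near_perfect_deviation_sum[OF a near sum \<open>n > 0\<close>]]
    by (simp add: D_def)
  finally show ?thesis
    by (simp add: cyclic_latin_square_def field_simps)
qed

end
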